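(* Let $R$ be a ring with identity and involution $*$, and let $a\in R$. The following conditions are equivalent: (1) $a$ is core invertible; (2) $R = aR \oplus (a^* )^{\circ}$ and $R = aR \oplus a^{\circ}$; (3) $R = aR + (a^* )^{\circ}$ and $R = aR \oplus a^{\circ}$; (4) $R = Ra^* \oplus {}^{\circ}a$ and $R = aR \oplus a^{\circ}$; (5) $R = Ra^* + {}^{\circ}a$ and $R = aR \oplus a^{\circ}$; (6) $R = aR \oplus (a^* )^{\circ}$ and $R = Ra \oplus {}^{\circ}a$; (7) $R = aR + (a^* )^{\circ}$ and $R = Ra \oplus {}^{\circ}a$; (8) $R = Ra^* \oplus {}^{\circ}a$ and $R = Ra \oplus {}^{\circ}a$; (9) $R = Ra^* + {}^{\circ}a$ and $R = Ra \oplus {}^{\circ}a$. In this case, $$a^{\oplus} = a y_1^2 a x_1 = a y_1^2 a x_2^* = y_2 a x_1 = y_2 a x_2^*,$$ where $x_1,x_2,y_1,y_2\in R$ are any elements with $1 = ax_1 + u_1 = x_2 a^* + u_2 = a y_1 + v_1 = y_2 a + v_2$ for some $u_1 \in (a^* )^{\circ}$, $v_1 \in a^{\circ}$ and $u_2, v_2 \in {}^{\circ}a$.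
   Context: An involution on $R$ satisfies $(a^* )^*=a$, $(ab)^*=b^*a^*$, $(a+b)^*=a^*+b^*$. An element $x\in R$ is a core inverse of $a$ if $axa=a$, $xR=aR$ and $Rx=Ra^*$; it is unique, denoted $a^{\oplus}$, and $a$ is then core invertible. For $c\in R$: $cR=\{cx: x\in R\}$, $Rc=\{xc:x\in R\}$, $c^{\circ}=\{x\in R: cx=0\}$ (right annihilator), ${}^{\circ}c=\{x\in R: xc=0\}$ (left annihilator). "$R = A \oplus B$" means $R=A+B$ with $A\cap B=\{0\}$. *)

theory Defs
  imports Main
begin

text \<open>A ring with identity is modelled by the type class ring_1 (not necessarily
commutative); the involution is an explicit function s.\<close>

definition involution :: "('a::ring_1 \<Rightarrow> 'a) \<Rightarrow> bool" where
  "involution s \<longleftrightarrow> (\<forall>a. s (s a) = a) \<and> (\<forall>a b. s (a * b) = s b * s a)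
     \<and> (\<forall>a b. s (a + b) = s a + s b)"

definition rideal :: "'a::ring_1 \<Rightarrow> 'a set" where
  "rideal c = {c * x | x. True}"

definition lideal :: "'a::ring_1 \<Rightarrow> 'a set" where
  "lideal c = {x * c | x. True}"

definition rann :: "'a::ring_1 \<Rightarrow> 'a set" where
  "rann c = {x. c * x = 0}"

definition lann :: "'a::ring_1 \<Rightarrow> 'a set" where
  "lann c = {x. x * c = 0}"

definition sum_whole :: "'a::ring_1 set \<Rightarrow> 'a set \<Rightarrow> bool" where
  "sum_whole A B \<longleftrightarrow> (\<forall>r. \<exists>x\<in>A. \<exists>y\<in>B. r = x + y)"

definition dsum_whole :: "'a::ring_1 set \<Rightarrow> 'a set \<Rightarrow> bool" where
  "dsum_whole A B \<longleftrightarrow> sum_whole A B \<and> A \<inter> B = {0}"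

definition is_core_inverse :: "('a::ring_1 \<Rightarrow> 'a) \<Rightarrow> 'a \<Rightarrow> 'a \<Rightarrow> bool" where
  "is_core_inverse s a x \<longleftrightarrow> a * x * a = a \<and> rideal x = rideal a \<and> lideal x = lideal (s a)"

definition core_invertible :: "('a::ring_1 \<Rightarrow> 'a) \<Rightarrow> 'a \<Rightarrow> bool" where
  "core_invertible s a \<longleftrightarrow> (\<exists>x. is_core_inverse s a x)"

definition core_inv :: "('a::ring_1 \<Rightarrow> 'a) \<Rightarrow> 'a \<Rightarrow> 'a" where
  "core_inv s a = (THE x. is_core_inverse s a x)"

end

theory Submission imports Defs begin

text \<open>Core invertibility splits into two independent conditions: \<open>a\<close> has a
group inverse \<open>a\<^sup>#\<close>, and \<open>a\<^sup>* \<in> a\<^sup>*aR\<close>, i.e. \<open>a\<^sup>* = a\<^sup>*ax\<close> for some \<open>x\<close>;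
then \<open>a\<^sup>\<oplus> = a\<^sup>#ax\<close>. The decompositions \<open>R = aR \<oplus> a\<^sup>\<circ>\<close> and \<open>R = Ra \<oplus> \<^sup>\<circ>a\<close>
each characterise group invertibility, with \<open>a\<^sup># = ay\<^sup>2\<close> resp. \<open>y\<^sup>2a\<close> read off
from \<open>1 = ay + v\<close> resp. \<open>1 = ya + v\<close>. A decomposition \<open>1 = at + u\<close> with
\<open>a\<^sup>*u = 0\<close> (or \<open>1 = ta\<^sup>* + u\<close> with \<open>ua = 0\<close>) is exactly a witness of
\<open>a\<^sup>* \<in> a\<^sup>*aR\<close>, and that condition already forces the sums \<open>aR + (a\<^sup>*)\<^sup>\<circ>\<close> and
\<open>Ra\<^sup>* + \<^sup>\<circ>a\<close> to be direct.\<close>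

lemma involution_simps:
  assumes "involution s"
  shows "s (s a) = a" "s (a * b) = s b * s a"
  using assms by (simp_all add: involution_def)

lemma mem_rideal: "x \<in> rideal c \<longleftrightarrow> (\<exists>t. x = c * t)"
  by (simp add: rideal_def)

lemma mem_lideal: "x \<in> lideal c \<longleftrightarrow> (\<exists>t. x = t * c)"
  by (simp add: lideal_def)

lemma mem_rann: "x \<in> rann c \<longleftrightarrow> c * x = 0"
  by (simp add: rann_def)

lemma mem_lann: "x \<in> lann c \<longleftrightarrow> x * c = 0"
  by (simp add: lann_def)

lemmas ideal_simps = mem_rideal mem_lideal mem_rann mem_lann

lemma zero_mem_ideals [simp]: "0 \<in> rideal c" "0 \<in> lideal c" "0 \<in> rann c" "0 \<in> lann c"
  by (simp_all add: ideal_simps) (metis mult_zero_right, metis mult_zero_left)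

lemma inter_eq_zero_iff:
  assumes "0 \<in> A" "0 \<in> B"
  shows "A \<inter> B = {0} \<longleftrightarrow> (\<forall>z. z \<in> A \<longrightarrow> z \<in> B \<longrightarrow> z = 0)"
  using assms by blast

lemma sum_whole_unit_decomposition:
  assumes "sum_whole A B"
  obtains x y where "x \<in> A" "y \<in> B" "1 = x + y"
  using assms unfolding sum_whole_def by blast

lemma sum_whole_by_projection:
  assumes "\<And>r. p r \<in> A" "\<And>r. r - p r \<in> B"
  shows "sum_whole A B"
  unfolding sum_whole_def
proof
  fix r
  show "\<exists>x\<in>A. \<exists>y\<in>B. r = x + y"
    using assms[of r] by (intro bexI[of _ "p r"] bexI[of _ "r - p r"]) simp_all
qed

lemma dsum_wholeI:
  assumes "sum_whole A B" "0 \<in> A" "0 \<in> B" "\<And>z. z \<in> A \<Longrightarrow> z \<in> B \<Longrightarrow> z = 0"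
  shows "dsum_whole A B"
  using assms unfolding dsum_whole_def by blast

subsection \<open>The condition \<open>a\<^sup>* \<in> a\<^sup>*aR\<close>\<close>

lemma star_factor_of_right_decomposition:
  fixes a :: "'a::ring_1"
  assumes "1 = a * t + u" "b * u = 0"
  shows "b = b * a * t"
proof -
  have "b = b * (a * t + u)" using assms(1) by (metis mult_1_right)
  then show ?thesis using assms(2) by (simp add: distrib_left mult.assoc)
qed

lemma star_factor_of_left_decomposition:
  fixes a :: "'a::ring_1"
  assumes "1 = t * b + u" "u * a = 0"
  shows "a = t * b * a"
proof -
  have "a = (t * b + u) * a" using assms(1) by (metis mult_1_left)
  then show ?thesis using assms(2) by (simp add: distrib_right mult.assoc)
qed

lemma sum_whole_rideal_rann_iff: "sum_whole (rideal a) (rann b) \<longleftrightarrow> (\<exists>t. b = b * a * t)"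
proof
  assume "sum_whole (rideal a) (rann b)"
  then obtain x u where "x \<in> rideal a" "u \<in> rann b" "1 = x + u"
    by (rule sum_whole_unit_decomposition)
  then obtain t where "1 = a * t + u" "b * u = 0" by (auto simp: ideal_simps)
  then show "\<exists>t. b = b * a * t" by (blast intro: star_factor_of_right_decomposition)
next
  assume "\<exists>t. b = b * a * t"
  then obtain t where t: "b = b * a * t" by blast
  show "sum_whole (rideal a) (rann b)"
  proof (rule sum_whole_by_projection)
    show "a * (t * r) \<in> rideal a" for r by (auto simp: mem_rideal)
    have "b * (r - a * (t * r)) = b * r - b * a * t * r" for r
      by (simp add: right_diff_distrib mult.assoc)
    then show "r - a * (t * r) \<in> rann b" for r by (simp add: mem_rann flip: t)
  qed
qed

lemma sum_whole_lideal_lann_iff: "sum_whole (lideal b) (lann a) \<longleftrightarrow> (\<exists>t. a = t * b * a)"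
proof
  assume "sum_whole (lideal b) (lann a)"
  then obtain x u where "x \<in> lideal b" "u \<in> lann a" "1 = x + u"
    by (rule sum_whole_unit_decomposition)
  then obtain t where "1 = t * b + u" "u * a = 0" by (auto simp: ideal_simps)
  then show "\<exists>t. a = t * b * a" by (blast intro: star_factor_of_left_decomposition)
next
  assume "\<exists>t. a = t * b * a"
  then obtain t where t: "a = t * b * a" by blast
  show "sum_whole (lideal b) (lann a)"
  proof (rule sum_whole_by_projection)
    show "r * t * b \<in> lideal b" for r by (auto simp: mem_lideal)
    have "(r - r * t * b) * a = r * a - r * (t * b * a)" for r
      by (simp add: left_diff_distrib mult.assoc)
    then show "r - r * t * b \<in> lann a" for r by (simp add: mem_lann flip: t)
  qed
qed

lemma star_factor_to_left:
  assumes "involution s" and "s a = s a * a * t"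
  shows "a = s t * s a * a"
proof -
  note S = involution_simps[OF assms(1)]
  have "a = s (s a)" using S by simp
  also have "\<dots> = s (s a * a * t)" using assms(2) by (rule arg_cong)
  also have "\<dots> = s t * s a * a" using S by (simp add: mult.assoc)
  finally show ?thesis .
qed

lemma star_factor_to_right:
  assumes "involution s" and "a = t * s a * a"
  shows "s a = s a * a * s t"
proof -
  note S = involution_simps[OF assms(1)]
  from assms(2) have "s a = s (t * s a * a)" by (rule arg_cong)
  also have "\<dots> = s a * a * s t" using S by (simp add: mult.assoc)
  finally show ?thesis .
qed

lemma star_factor_left_iff_right:
  assumes "involution s"
  shows "(\<exists>t. a = t * s a * a) \<longleftrightarrow> (\<exists>t. s a = s a * a * t)"
  using star_factor_to_left[OF assms] star_factor_to_right[OF assms] by blast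

lemma rideal_inter_rann_star:
  assumes "involution s" and "s a = s a * a * t"
  shows "rideal a \<inter> rann (s a) = {0}"
proof -
  have a: "a = s t * s a * a" using star_factor_to_left[OF assms] .
  have "z = 0" if "z = a * w" "s a * z = 0" for z w
  proof -
    have "z = s t * s a * a * w" by (simp only: that(1) flip: a)
    also have "\<dots> = s t * (s a * z)" using that(1) by (simp add: mult.assoc)
    finally show ?thesis using that(2) by simp
  qed
  then show ?thesis by (simp add: inter_eq_zero_iff) (auto simp: ideal_simps)
qed

lemma lideal_inter_lann_star:
  assumes t: "s a = s a * a * t"
  shows "lideal (s a) \<inter> lann a = {0}"
proof -
  have "z = 0" if "z = w * s a" "z * a = 0" for z w
  proof -
    have "z = w * (s a * a * t)" by (simp only: that(1) flip: t)
    also have "\<dots> = z * a * t" using that(1) by (simp add: mult.assoc)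
    finally show ?thesis using that(2) by simp
  qed
  then show ?thesis by (simp add: inter_eq_zero_iff) (auto simp: ideal_simps)
qed

lemma star_factor_iff_decompositions:
  assumes "involution s"
  shows "sum_whole (rideal a) (rann (s a)) \<longleftrightarrow> (\<exists>t. s a = s a * a * t)"
    and "dsum_whole (rideal a) (rann (s a)) \<longleftrightarrow> (\<exists>t. s a = s a * a * t)"
    and "sum_whole (lideal (s a)) (lann a) \<longleftrightarrow> (\<exists>t. s a = s a * a * t)"
    and "dsum_whole (lideal (s a)) (lann a) \<longleftrightarrow> (\<exists>t. s a = s a * a * t)"
proof -
  show right: "sum_whole (rideal a) (rann (s a)) \<longleftrightarrow> (\<exists>t. s a = s a * a * t)"
    by (rule sum_whole_rideal_rann_iff)
  show left: "sum_whole (lideal (s a)) (lann a) \<longleftrightarrow> (\<exists>t. s a = s a * a * t)"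
    unfolding sum_whole_lideal_lann_iff by (rule star_factor_left_iff_right[OF assms])
  show "dsum_whole (rideal a) (rann (s a)) \<longleftrightarrow> (\<exists>t. s a = s a * a * t)"
    using right rideal_inter_rann_star[OF assms] unfolding dsum_whole_def by blast
  show "dsum_whole (lideal (s a)) (lann a) \<longleftrightarrow> (\<exists>t. s a = s a * a * t)"
    using left lideal_inter_lann_star unfolding dsum_whole_def by blast
qed

subsection \<open>Group inverses\<close>

definition group_inverse :: "'a::ring_1 \<Rightarrow> 'a \<Rightarrow> bool" where
  "group_inverse a g \<longleftrightarrow> a * g * a = a \<and> g * a * g = g \<and> a * g = g * a"

definition group_invertible :: "'a::ring_1 \<Rightarrow> bool" where
  "group_invertible a \<longleftrightarrow> (\<exists>g. group_inverse a g)"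

lemma group_inverseD:
  assumes "group_inverse a g"
  shows "a * g * a = a" "g * a * g = g" "a * g = g * a" "a * a * g = a" "g * a * a = a"
proof -
  show ag: "a * g * a = a" "g * a * g = g" "a * g = g * a"
    using assms unfolding group_inverse_def by blast+
  have "a * a * g = a * (g * a)" using ag(3) by (simp add: mult.assoc)
  then show "a * a * g = a" using ag(1) by (simp add: mult.assoc)
  have "g * a * a = a * g * a" using ag(3) by simp
  then show "g * a * a = a" using ag(1) by simp
qed

lemma group_inverse_dsum_right:
  assumes "group_inverse a g"
  shows "dsum_whole (rideal a) (rann a)"
proof (rule dsum_wholeI)
  note g = group_inverseD[OF assms]
  show "sum_whole (rideal a) (rann a)"
  proof (rule sum_whole_by_projection)
    show "a * (g * r) \<in> rideal a" for r by (auto simp: mem_rideal)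
    have "a * (r - a * (g * r)) = a * r - (a * a * g) * r" for r
      by (simp add: right_diff_distrib mult.assoc)
    then show "r - a * (g * r) \<in> rann a" for r using g(4) by (simp add: mem_rann)
  qed
  show "z = 0" if z: "z \<in> rideal a" "z \<in> rann a" for z
  proof -
    obtain t where t: "z = a * t" using z(1) by (auto simp: mem_rideal)
    have "z = g * a * a * t" using t g(5) by simp
    also have "\<dots> = g * (a * z)" using t by (simp add: mult.assoc)
    finally show ?thesis using z(2) by (simp add: mem_rann)
  qed
qed simp_all

lemma group_inverse_dsum_left:
  assumes "group_inverse a g"
  shows "dsum_whole (lideal a) (lann a)"
proof (rule dsum_wholeI)
  note g = group_inverseD[OF assms]
  show "sum_whole (lideal a) (lann a)"
  proof (rule sum_whole_by_projection)
    show "r * g * a \<in> lideal a" for r by (auto simp: mem_lideal)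
    have "(r - r * g * a) * a = r * a - r * (g * a * a)" for r
      by (simp add: left_diff_distrib mult.assoc)
    then show "r - r * g * a \<in> lann a" for r using g(5) by (simp add: mem_lann)
  qed
  show "z = 0" if z: "z \<in> lideal a" "z \<in> lann a" for z
  proof -
    obtain t where t: "z = t * a" using z(1) by (auto simp: mem_lideal)
    have "z = t * (a * a * g)" using t g(4) by simp
    also have "\<dots> = z * a * g" using t by (simp add: mult.assoc)
    finally show ?thesis using z(2) by (simp add: mem_lann)
  qed
qed simp_all

lemma group_inverse_of_right_decomposition:
  fixes a :: "'a::ring_1"
  assumes direct: "rideal a \<inter> rann a = {0}" and one: "1 = a * y + v" and v: "a * v = 0"
  shows "group_inverse a (a * y^2)"
proof -
  have cancel: "z = w" if "z - w \<in> rideal a" "a * z = a * w" for z w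
  proof -
    have "z - w \<in> rann a" using that(2) by (simp add: mem_rann right_diff_distrib)
    with that(1) have "z - w \<in> {0}" using direct by blast
    then show ?thesis by simp
  qed
  have aay: "a * (a * y) = a"
    using star_factor_of_right_decomposition[OF one v] by (simp add: mult.assoc)
  have aya: "a * y * a = a"
  proof (rule cancel)
    show "a * y * a - a \<in> rideal a"
      unfolding mem_rideal by (rule exI[of _ "y * a - 1"]) (simp add: right_diff_distrib mult.assoc)
    show "a * (a * y * a) = a * a" using aay by (simp flip: mult.assoc)
  qed
  have ayya: "a * y * y * a = a * y"
  proof (rule cancel)
    show "a * y * y * a - a * y \<in> rideal a"
      unfolding mem_rideal by (rule exI[of _ "y * y * a - y"]) (simp add: right_diff_distrib mult.assoc)
    have "a * (a * y * y * a) = a * (a * y) * (y * a)" by (simp add: mult.assoc)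
    then show "a * (a * y * y * a) = a * (a * y)" using aay aya by (simp add: mult.assoc)
  qed
  have ag: "a * (a * y^2) = a * y" using aay by (simp add: power2_eq_square flip: mult.assoc)
  have ga: "a * y^2 * a = a * y" using ayya by (simp add: power2_eq_square mult.assoc)
  have "a * y^2 * a * (a * y^2) = a * y * a * y^2" using ga by (simp add: mult.assoc)
  then show ?thesis unfolding group_inverse_def using ag ga aya by simp
qed

lemma group_inverse_of_left_decomposition:
  fixes a :: "'a::ring_1"
  assumes direct: "lideal a \<inter> lann a = {0}" and one: "1 = y * a + v" and v: "v * a = 0"
  shows "group_inverse a (y^2 * a)"
proof -
  have cancel: "z = w" if "z - w \<in> lideal a" "z * a = w * a" for z w
  proof -
    have "z - w \<in> lann a" using that(2) by (simp add: mem_lann left_diff_distrib)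
    with that(1) have "z - w \<in> {0}" using direct by blast
    then show ?thesis by simp
  qed
  have yaa: "y * a * a = a" using star_factor_of_left_decomposition[OF one v] by simp
  have aya: "a * y * a = a"
  proof (rule cancel)
    show "a * y * a - a \<in> lideal a"
      unfolding mem_lideal by (rule exI[of _ "a * y - 1"]) (simp add: left_diff_distrib)
    show "a * y * a * a = a * a" using yaa by (simp add: mult.assoc)
  qed
  have ayya: "a * y * y * a = y * a"
  proof (rule cancel)
    show "a * y * y * a - y * a \<in> lideal a"
      unfolding mem_lideal by (rule exI[of _ "a * y * y - y"]) (simp add: left_diff_distrib)
    have "a * y * y * a * a = (a * y) * (y * a * a)" by (simp add: mult.assoc)
    then show "a * y * y * a * a = y * a * a" using yaa aya by simp
  qed
  have ga: "y^2 * a * a = y * a" using yaa by (simp add: power2_eq_square mult.assoc)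
  have ag: "a * (y^2 * a) = y * a" using ayya by (simp add: power2_eq_square mult.assoc)
  have "y^2 * a * a * (y^2 * a) = y^2 * (a * y * a)" using ag by (simp add: mult.assoc)
  then have "y^2 * a * a * (y^2 * a) = y^2 * a" using aya by simp
  then show ?thesis unfolding group_inverse_def using ag ga yaa by simp
qed

lemma group_invertible_iff_dsum_right: "group_invertible a \<longleftrightarrow> dsum_whole (rideal a) (rann a)"
proof
  assume "dsum_whole (rideal a) (rann a)"
  then have direct: "rideal a \<inter> rann a = {0}" and sum: "sum_whole (rideal a) (rann a)"
    by (simp_all add: dsum_whole_def)
  from sum obtain x v where "x \<in> rideal a" "v \<in> rann a" "1 = x + v"
    by (rule sum_whole_unit_decomposition)
  then obtain y where "1 = a * y + v" "a * v = 0" by (auto simp: ideal_simps)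
  then show "group_invertible a"
    using group_inverse_of_right_decomposition[OF direct] by (auto simp: group_invertible_def)
qed (auto simp: group_invertible_def intro: group_inverse_dsum_right)

lemma group_invertible_iff_dsum_left: "group_invertible a \<longleftrightarrow> dsum_whole (lideal a) (lann a)"
proof
  assume "dsum_whole (lideal a) (lann a)"
  then have direct: "lideal a \<inter> lann a = {0}" and sum: "sum_whole (lideal a) (lann a)"
    by (simp_all add: dsum_whole_def)
  from sum obtain x v where "x \<in> lideal a" "v \<in> lann a" "1 = x + v"
    by (rule sum_whole_unit_decomposition)
  then obtain y where "1 = y * a + v" "v * a = 0" by (auto simp: ideal_simps)
  then show "group_invertible a"
    using group_inverse_of_left_decomposition[OF direct] by (auto simp: group_invertible_def)
qed (auto simp: group_invertible_def intro: group_inverse_dsum_left)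

subsection \<open>Core inverses\<close>

lemma rideal_subset:
  assumes "x = y * p"
  shows "rideal x \<subseteq> rideal y"
proof
  fix z assume "z \<in> rideal x"
  then obtain t where "z = x * t" by (auto simp: mem_rideal)
  then have "z = y * (p * t)" using assms by (simp add: mult.assoc)
  then show "z \<in> rideal y" by (auto simp: mem_rideal)
qed

lemma lideal_subset:
  assumes "x = p * y"
  shows "lideal x \<subseteq> lideal y"
proof
  fix z assume "z \<in> lideal x"
  then obtain t where "z = t * x" by (auto simp: mem_lideal)
  then have "z = (t * p) * y" using assms by (simp add: mult.assoc)
  then show "z \<in> lideal y" by (auto simp: mem_lideal)
qed

lemma rideal_eqI: "x = y * p \<Longrightarrow> y = x * q \<Longrightarrow> rideal x = rideal y"
  using rideal_subset by blast

lemma lideal_eqI: "x = p * y \<Longrightarrow> y = q * x \<Longrightarrow> lideal x = lideal y"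
  using lideal_subset by blast

lemma rideal_eqD:
  assumes "rideal x = rideal y"
  obtains p where "x = y * p"
proof -
  have "x \<in> rideal x" by (auto simp: mem_rideal intro: exI[of _ 1])
  then show ?thesis using assms that by (auto simp: mem_rideal)
qed

lemma lideal_eqD:
  assumes "lideal x = lideal y"
  obtains p where "x = p * y"
proof -
  have "x \<in> lideal x" by (auto simp: mem_lideal intro: exI[of _ 1])
  then show ?thesis using assms that by (auto simp: mem_lideal)
qed

lemma star_factor_hermitian:
  assumes "involution s" and x: "s a = s a * a * x"
  shows "s (a * x) = a * x" "a * x * a = a"
proof -
  note S = involution_simps[OF assms(1)]
  have a: "a = s x * s a * a" using star_factor_to_left[OF assms] .
  have "a * x = s x * (s a * a * x)" by (subst a) (simp add: mult.assoc)
  also have "\<dots> = s (a * x)" using S by (simp flip: x)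
  finally show herm: "s (a * x) = a * x" by simp
  have "a * x * a = s (a * x) * a" using herm by simp
  also have "\<dots> = s x * s a * a" using S by simp
  finally show "a * x * a = a" using a by simp
qed

lemma core_inverse_of_group_inverse:
  assumes inv: "involution s" and g: "group_inverse a g" and x: "s a = s a * a * x"
  shows "is_core_inverse s a (g * a * x)"
  unfolding is_core_inverse_def
proof (intro conjI)
  note S = involution_simps[OF inv] and G = group_inverseD[OF g]
  note X = star_factor_hermitian[OF inv x]
  have ag: "a * (g * a * x) = a * x" using G(1) by (simp flip: mult.assoc)
  show "a * (g * a * x) * a = a" using ag X(2) by simp
  show "rideal (g * a * x) = rideal a"
  proof (rule rideal_eqI)
    show "g * a * x = a * (g * x)" using G(3) by (simp flip: mult.assoc)
    have "g * a * x * (a * a) = g * (a * x * a) * a" by (simp add: mult.assoc)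
    also have "\<dots> = a" using X(2) G(5) by simp
    finally show "a = g * a * x * (a * a)" by simp
  qed
  show "lideal (g * a * x) = lideal (s a)"
  proof (rule lideal_eqI)
    have "g * a * x = g * s (a * x)" using X(1) by (simp add: mult.assoc)
    then show "g * a * x = g * s x * s a" using S by (simp add: mult.assoc)
    show "s a = s a * a * (g * a * x)" using ag x by (simp add: mult.assoc)
  qed
qed

lemma core_inverseD:
  assumes inv: "involution s" and c: "is_core_inverse s a x"
  shows "a * x * a = a" "x * a * x = x" "s (a * x) = a * x" "x * a * a = a" "a * x * x = x"
proof -
  note S = involution_simps[OF inv]
  have axa: "a * x * a = a" and R: "rideal x = rideal a" and L: "lideal x = lideal (s a)"
    using c by (simp_all add: is_core_inverse_def)
  obtain r where r: "x = a * r" using R by (rule rideal_eqD)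
  obtain t where t: "a = x * t" using R[symmetric] by (rule rideal_eqD)
  obtain q where q: "x = q * s a" using L by (rule lideal_eqD)
  show "a * x * a = a" by (rule axa)
  have "a * x * x = a * x * a * r" using r by (simp add: mult.assoc)
  then show "a * x * x = x" using axa r by simp
  have "s (a * x * a) = s a * s x * s a" using S by (simp add: mult.assoc)
  then have sa: "s a * s x * s a = s a" using axa by simp
  have "x * s (a * x) = q * (s a * s x * s a)" using q S by (simp add: mult.assoc)
  then have x_sax: "x * s (a * x) = x" using sa q by simp
  have herm: "s (a * x) = a * x"
  proof -
    have ax: "a * x = a * x * s (a * x)" using x_sax by (simp add: mult.assoc)
    have "s (a * x) = s (a * x * s (a * x))" using ax by (rule arg_cong)
    also have "\<dots> = s (s (a * x)) * s (a * x)" by (rule S(2))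
    also have "\<dots> = a * x * s (a * x)" by (simp only: S(1))
    finally show ?thesis using ax by simp
  qed
  show "s (a * x) = a * x" by (rule herm)
  show xax: "x * a * x = x" using x_sax herm by (simp add: mult.assoc)
  have "x * a * a = x * a * x * t" using t by (simp add: mult.assoc)
  then show "x * a * a = a" using xax t by simp
qed

lemma core_inverse_unique:
  assumes inv: "involution s" and x: "is_core_inverse s a x" and y: "is_core_inverse s a y"
  shows "x = y"
proof -
  note S = involution_simps[OF inv]
  note X = core_inverseD[OF inv x] and Y = core_inverseD[OF inv y]
  have sa_say: "s a * s (a * y) = s a"
  proof -
    have "s a * s (a * y) = s (a * y * a)" using S by (simp add: mult.assoc)
    then show ?thesis using Y(1) by simp
  qed
  have "x = x * s (a * x)" using X(2,3) by (simp add: mult.assoc)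
  also have "\<dots> = x * s (a * x) * s (a * y)"
    using sa_say S by (simp add: mult.assoc)
  also have "\<dots> = x * a * y" using X(2,3) Y(3) by (simp add: mult.assoc)
  also have "\<dots> = x * a * a * y * y" using Y(5) by (simp add: mult.assoc)
  also have "\<dots> = y" using X(4) Y(5) by (simp add: mult.assoc)
  finally show ?thesis .
qed

lemma core_inv_eqI:
  assumes "involution s" and "is_core_inverse s a x"
  shows "core_inv s a = x"
  unfolding core_inv_def using assms core_inverse_unique by (blast intro: the_equality)

lemma core_inverse_group_inverse:
  assumes "involution s" and "is_core_inverse s a x"
  shows "group_inverse a (x * x * a)"
proof -
  note X = core_inverseD[OF assms]
  have ag: "a * (x * x * a) = x * a" using X(5) by (simp flip: mult.assoc)
  have ga: "x * x * a * a = x * a" using X(4) by (simp add: mult.assoc)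
  have "x * x * a * a * (x * x * a) = (x * a * x) * x * a" using ga by (simp add: mult.assoc)
  then have "x * x * a * a * (x * x * a) = x * x * a" using X(2) by simp
  then show ?thesis unfolding group_inverse_def using ag ga X(1,4) by simp
qed

lemma core_inverse_star_factor:
  assumes inv: "involution s" and c: "is_core_inverse s a x"
  shows "s a = s a * a * x"
proof -
  note S = involution_simps[OF inv] and X = core_inverseD[OF inv c]
  have "s a * a * x = s a * s (a * x)" using X(3) by (simp add: mult.assoc)
  also have "\<dots> = s (a * x * a)" using S by (simp add: mult.assoc)
  finally show ?thesis using X(1) by simp
qed

theorem core_invertible_iff:
  assumes "involution s"
  shows "core_invertible s a \<longleftrightarrow> (\<exists>t. s a = s a * a * t) \<and> group_invertible a"
  unfolding core_invertible_def group_invertible_def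
  using core_inverse_group_inverse[OF assms] core_inverse_star_factor[OF assms]
    core_inverse_of_group_inverse[OF assms] by blast

lemma core_inv_eq_group_inverse:
  assumes "involution s" and "group_inverse a g" and "s a = s a * a * x"
  shows "core_inv s a = g * a * x"
  using assms core_inv_eqI core_inverse_of_group_inverse by blast

lemma core_inv_formulas:
  assumes inv: "involution s" and "core_invertible s a"
    and u1: "u1 \<in> rann (s a)" and v1: "v1 \<in> rann a" and u2: "u2 \<in> lann a" and v2: "v2 \<in> lann a"
    and x1: "1 = a * x1 + u1" and x2: "1 = x2 * s a + u2"
    and y1: "1 = a * y1 + v1" and y2: "1 = y2 * a + v2"
  shows "core_inv s a = a * y1^2 * a * x1" "core_inv s a = a * y1^2 * a * s x2"
    and "core_inv s a = y2 * a * x1" "core_inv s a = y2 * a * s x2"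
proof -
  have "group_invertible a" using assms(2) core_invertible_iff[OF inv] by blast
  then have direct: "rideal a \<inter> rann a = {0}" "lideal a \<inter> lann a = {0}"
    using group_invertible_iff_dsum_right group_invertible_iff_dsum_left
    unfolding dsum_whole_def by blast+
  have g1: "group_inverse a (a * y1^2)"
    using group_inverse_of_right_decomposition[OF direct(1) y1] v1 by (simp add: mem_rann)
  have g2: "group_inverse a (y2^2 * a)"
    using group_inverse_of_left_decomposition[OF direct(2) y2] v2 by (simp add: mem_lann)
  have t1: "s a = s a * a * x1"
    using star_factor_of_right_decomposition[OF x1] u1 by (simp add: mem_rann)
  have t2: "s a = s a * a * s x2"
    using star_factor_to_right[OF inv star_factor_of_left_decomposition[OF x2]] u2
    by (simp add: mem_lann)
  have "a = y2 * a * a" using star_factor_of_left_decomposition[OF y2] v2 by (simp add: mem_lann)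
  then have y2a: "y2^2 * a * a * z = y2 * a * z" for z by (simp add: power2_eq_square mult.assoc)
  show "core_inv s a = a * y1^2 * a * x1" by (rule core_inv_eq_group_inverse[OF inv g1 t1])
  show "core_inv s a = a * y1^2 * a * s x2" by (rule core_inv_eq_group_inverse[OF inv g1 t2])
  show "core_inv s a = y2 * a * x1" using core_inv_eq_group_inverse[OF inv g2 t1] y2a by simp
  show "core_inv s a = y2 * a * s x2" using core_inv_eq_group_inverse[OF inv g2 t2] y2a by simp
qed

theorem proposition2p11:
  fixes s :: "'a::ring_1 \<Rightarrow> 'a" and a :: 'a
  assumes inv: "involution s"
  shows
   "(core_invertible s a \<longleftrightarrow> dsum_whole (rideal a) (rann (s a)) \<and> dsum_whole (rideal a) (rann a))
  \<and> (core_invertible s a \<longleftrightarrow> sum_whole (rideal a) (rann (s a)) \<and> dsum_whole (rideal a) (rann a))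
  \<and> (core_invertible s a \<longleftrightarrow> dsum_whole (lideal (s a)) (lann a) \<and> dsum_whole (rideal a) (rann a))
  \<and> (core_invertible s a \<longleftrightarrow> sum_whole (lideal (s a)) (lann a) \<and> dsum_whole (rideal a) (rann a))
  \<and> (core_invertible s a \<longleftrightarrow> dsum_whole (rideal a) (rann (s a)) \<and> dsum_whole (lideal a) (lann a))
  \<and> (core_invertible s a \<longleftrightarrow> sum_whole (rideal a) (rann (s a)) \<and> dsum_whole (lideal a) (lann a))
  \<and> (core_invertible s a \<longleftrightarrow> dsum_whole (lideal (s a)) (lann a) \<and> dsum_whole (lideal a) (lann a))
  \<and> (core_invertible s a \<longleftrightarrow> sum_whole (lideal (s a)) (lann a) \<and> dsum_whole (lideal a) (lann a))
  \<and> (core_invertible s a \<longrightarrow>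
      (\<forall>x1 x2 y1 y2 u1 u2 v1 v2.
         u1 \<in> rann (s a) \<and> v1 \<in> rann a \<and> u2 \<in> lann a \<and> v2 \<in> lann a \<and>
         1 = a * x1 + u1 \<and> 1 = x2 * s a + u2 \<and> 1 = a * y1 + v1 \<and> 1 = y2 * a + v2
         \<longrightarrow> core_inv s a = a * y1^2 * a * x1
           \<and> core_inv s a = a * y1^2 * a * s x2
           \<and> core_inv s a = y2 * a * x1
           \<and> core_inv s a = y2 * a * s x2))"
  by (intro conjI impI allI; (elim conjE, rule core_inv_formulas[OF inv]; assumption)?;
      simp add: core_invertible_iff[OF inv] star_factor_iff_decompositions[OF inv]
        flip: group_invertible_iff_dsum_right group_invertible_iff_dsum_left)

end
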